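(* Let $\mathcal E$ be a nonlinear Dirichlet form on $L^2(\mu)$ (so that $\mathcal E_e$ exists). (a) For every $h\in\ker\|\cdot\|_{L_e}$ and every $\alpha\ge0$ the set $\{h>\alpha\}$ is $\mathcal E$-invariant. (b) If $\mathcal E$ is irreducible, then $\ker\|\cdot\|_{L_e}\subseteq\mathbb R\cdot1$.
   Context: $(X,\mathfrak A,\mu)$ is $\sigma$-finite; $L^0(\mu)$ carries local convergence in measure. A nonlinear Dirichlet form is a lower semicontinuous convex $\mathcal E\colon L^2(\mu)\to[0,\infty]$ with $\mathcal E(-f)=\mathcal E(f)$, $\mathcal E(0)=0$, such that $\mathcal E(f+Cg)+\mathcal E(f-Cg)\le\mathcal E(f+g)+\mathcal E(f-g)$ for all $f,g$ and every 1-Lipschitz $C\colon\mathbb R\to\mathbb R$ with $C(0)=0$. $\mathcal E_e$ is the lower semicontinuous relaxation on $L^0(\mu)$ (w.r.t. local convergence in measure) of $\mathcal E$ extended by $+\infty$ outside $L^2(\mu)$; $M(\mathcal E_e)=\{f:\lim_{\lambda\to0+}\mathcal E_e(\lambda f)=0\}$ and $\|f\|_{L_e}=\inf\{\lambda>0:\mathcal E_e(\lambda^{-1}f)\le1\}$ on $M(\mathcal E_e)$. A measurable $A\subseteq X$ is $\mathcal E$-invariant if $\mathcal E(1_Af)\le\mathcal E(f)$ for all $f\in L^2(\mu)$; $\mathcal E$ is irreducible if every $\mathcal E$-invariant set is null or co-null. *)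

theory Defs
  imports "HOL-Analysis.Analysis"
begin

definition L2 :: "'a measure \<Rightarrow> ('a \<Rightarrow> real) \<Rightarrow> bool" where
  "L2 M f \<longleftrightarrow> f \<in> borel_measurable M \<and> integrable M (\<lambda>x. (f x)\<^sup>2)"

text \<open>Nonlinear Dirichlet form on L^2(mu); E is only relevant on L^2 functions and
  respects equality almost everywhere (i.e. it is a function on L^2 classes).\<close>
definition nonlinear_dirichlet_form :: "'a measure \<Rightarrow> (('a \<Rightarrow> real) \<Rightarrow> ennreal) \<Rightarrow> bool" where
  "nonlinear_dirichlet_form M E \<longleftrightarrow>
     (\<forall>f g. L2 M f \<longrightarrow> L2 M g \<longrightarrow> (AE x in M. f x = g x) \<longrightarrow> E f = E g) \<and>
     (\<forall>f g t. L2 M f \<longrightarrow> L2 M g \<longrightarrow> 0 \<le> t \<longrightarrow> t \<le> 1 \<longrightarrow>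
        E (\<lambda>x. t * f x + (1 - t) * g x) \<le> ennreal t * E f + ennreal (1 - t) * E g) \<and>
     (\<forall>fs f. (\<forall>n. L2 M (fs n)) \<longrightarrow> L2 M f \<longrightarrow>
        ((\<lambda>n. integral\<^sup>L M (\<lambda>x. (fs n x - f x)\<^sup>2)) \<longlonglongrightarrow> 0) \<longrightarrow>
        E f \<le> liminf (\<lambda>n. E (fs n))) \<and>
     (\<forall>f. L2 M f \<longrightarrow> E (\<lambda>x. - f x) = E f) \<and>
     E (\<lambda>x. 0) = 0 \<and>
     (\<forall>f g C. L2 M f \<longrightarrow> L2 M g \<longrightarrow> (\<forall>s t. \<bar>C s - C t\<bar> \<le> \<bar>s - t\<bar>) \<longrightarrow> C 0 = 0 \<longrightarrow>
        E (\<lambda>x. f x + C (g x)) + E (\<lambda>x. f x - C (g x)) \<le> E (\<lambda>x. f x + g x) + E (\<lambda>x. f x - g x))"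

definition E_ext :: "'a measure \<Rightarrow> (('a \<Rightarrow> real) \<Rightarrow> ennreal) \<Rightarrow> ('a \<Rightarrow> real) \<Rightarrow> ennreal" where
  "E_ext M E f = (if L2 M f then E f else \<infinity>)"

definition conv_loc_measure :: "'a measure \<Rightarrow> (nat \<Rightarrow> 'a \<Rightarrow> real) \<Rightarrow> ('a \<Rightarrow> real) \<Rightarrow> bool" where
  "conv_loc_measure M fs f \<longleftrightarrow> f \<in> borel_measurable M \<and> (\<forall>n. fs n \<in> borel_measurable M) \<and>
     (\<forall>A\<in>sets M. emeasure M A < \<infinity> \<longrightarrow> (\<forall>\<epsilon>>0.
        ((\<lambda>n. emeasure M (A \<inter> {x\<in>space M. \<bar>fs n x - f x\<bar> > \<epsilon>})) \<longlonglongrightarrow> 0)))"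

text \<open>Lower semicontinuity w.r.t. local convergence in measure (metrizable for sigma-finite mu,
  so sequential lower semicontinuity).\<close>
definition lsc_L0 :: "'a measure \<Rightarrow> (('a \<Rightarrow> real) \<Rightarrow> ennreal) \<Rightarrow> bool" where
  "lsc_L0 M G \<longleftrightarrow> (\<forall>fs f. conv_loc_measure M fs f \<longrightarrow> G f \<le> liminf (\<lambda>n. G (fs n)))"

definition E_e :: "'a measure \<Rightarrow> (('a \<Rightarrow> real) \<Rightarrow> ennreal) \<Rightarrow> ('a \<Rightarrow> real) \<Rightarrow> ennreal" where
  "E_e M E f = (SUP G \<in> {G. lsc_L0 M G \<and> (\<forall>g. G g \<le> E_ext M E g)}. G f)"

definition M_Ee :: "'a measure \<Rightarrow> (('a \<Rightarrow> real) \<Rightarrow> ennreal) \<Rightarrow> ('a \<Rightarrow> real) set" where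
  "M_Ee M E = {f. f \<in> borel_measurable M \<and>
     ((\<lambda>l. E_e M E (\<lambda>x. l * f x)) \<longlongrightarrow> 0) (at_right (0::real))}"

definition norm_Le :: "'a measure \<Rightarrow> (('a \<Rightarrow> real) \<Rightarrow> ennreal) \<Rightarrow> ('a \<Rightarrow> real) \<Rightarrow> real" where
  "norm_Le M E f = Inf {l::real. l > 0 \<and> E_e M E (\<lambda>x. f x / l) \<le> 1}"

definition ker_Le :: "'a measure \<Rightarrow> (('a \<Rightarrow> real) \<Rightarrow> ennreal) \<Rightarrow> ('a \<Rightarrow> real) set" where
  "ker_Le M E = {f \<in> M_Ee M E. norm_Le M E f = 0}"

definition E_invariant :: "'a measure \<Rightarrow> (('a \<Rightarrow> real) \<Rightarrow> ennreal) \<Rightarrow> 'a set \<Rightarrow> bool" where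
  "E_invariant M E A \<longleftrightarrow> A \<in> sets M \<and>
     (\<forall>f. L2 M f \<longrightarrow> E (\<lambda>x. indicator A x * f x) \<le> E f)"

definition E_irreducible :: "'a measure \<Rightarrow> (('a \<Rightarrow> real) \<Rightarrow> ennreal) \<Rightarrow> bool" where
  "E_irreducible M E \<longleftrightarrow> (\<forall>A. E_invariant M E A \<longrightarrow>
     emeasure M A = 0 \<or> emeasure M (space M - A) = 0)"

end

theory Submission
  imports Defs
begin

(*
  For h in the kernel, E_e (h / l) <= 1 for arbitrarily small l > 0. Write clip u a for the
  truncation of a to [-u, u]. For f in L^2, 0 < l <= 1 and b >= 0 the contraction property gives
  E (clip (l g - b)^+ f) <= E f + 2 l E g, so the functional
    G g = (if E f + 4 l < E (clip (l g - b)^+ f) then 2 else 0)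
  lies below E extended by infinity. The map g |-> clip (l g - b)^+ f is Lipschitz and dominated
  by |f|, so it turns local convergence in measure into L^2 convergence, and G is lower
  semicontinuous. Hence G <= E_e, and evaluating at g = h / l with l -> 0 yields
  E (clip (S (h - alpha))^+ f) <= E f for every S > 0. As S -> infinity these truncations tend
  to 1_{h > alpha} f in L^2, and lower semicontinuity of E gives the invariance of {h > alpha}.
  Since E_e is even, -h lies in the kernel as well; under irreducibility every level set
  {h > alpha}, {-h > alpha} with alpha >= 0 is null or co-null, which forces h to be a.e. constant.
*)

lemma L2_measurable: "L2 M f \<Longrightarrow> f \<in> borel_measurable M"
  unfolding L2_def by simp

lemma L2_zero: "L2 M (\<lambda>x. 0)"
  unfolding L2_def by simp

lemma L2_bound:
  assumes "L2 M f" "L2 M g" "q \<in> borel_measurable M"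
    and "\<And>x. x \<in> space M \<Longrightarrow> \<bar>q x\<bar> \<le> c * \<bar>f x\<bar> + d * \<bar>g x\<bar>"
  shows "L2 M q"
proof -
  have "integrable M (\<lambda>x. 2 * c\<^sup>2 * (f x)\<^sup>2 + 2 * d\<^sup>2 * (g x)\<^sup>2)"
    using assms(1,2) unfolding L2_def by auto
  then have "integrable M (\<lambda>x. (q x)\<^sup>2)"
  proof (rule Bochner_Integration.integrable_bound)
    show "(\<lambda>x. (q x)\<^sup>2) \<in> borel_measurable M" using assms(3) by measurable
    show "AE x in M. norm ((q x)\<^sup>2) \<le> norm (2 * c\<^sup>2 * (f x)\<^sup>2 + 2 * d\<^sup>2 * (g x)\<^sup>2)"
    proof (rule AE_I2)
      fix x assume x: "x \<in> space M"
      have "(q x)\<^sup>2 \<le> (c * \<bar>f x\<bar> + d * \<bar>g x\<bar>)\<^sup>2"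
        using assms(4)[OF x] by (metis abs_le_square_iff abs_of_nonneg abs_ge_zero order_trans)
      also have "\<dots> \<le> 2 * c\<^sup>2 * (f x)\<^sup>2 + 2 * d\<^sup>2 * (g x)\<^sup>2"
        using zero_le_power2[of "c * \<bar>f x\<bar> - d * \<bar>g x\<bar>"]
        by (simp add: power2_eq_square algebra_simps)
      finally show "norm ((q x)\<^sup>2) \<le> norm (2 * c\<^sup>2 * (f x)\<^sup>2 + 2 * d\<^sup>2 * (g x)\<^sup>2)" by simp
    qed
  qed
  then show ?thesis using assms(3) unfolding L2_def by simp
qed

lemma L2_dominated:
  assumes "L2 M f" "q \<in> borel_measurable M" "\<And>x. x \<in> space M \<Longrightarrow> \<bar>q x\<bar> \<le> c * \<bar>f x\<bar>"
  shows "L2 M q"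
  using L2_bound[OF assms(1) L2_zero assms(2), of c 0] assms(3) by simp

lemma L2_add:
  assumes "L2 M f" "L2 M g"
  shows "L2 M (\<lambda>x. a * f x + b * g x)"
proof (rule L2_bound[OF assms])
  have [measurable]: "f \<in> borel_measurable M" "g \<in> borel_measurable M"
    using assms by (auto dest: L2_measurable)
  show "(\<lambda>x. a * f x + b * g x) \<in> borel_measurable M"
    by measurable
  show "\<bar>a * f x + b * g x\<bar> \<le> \<bar>a\<bar> * \<bar>f x\<bar> + \<bar>b\<bar> * \<bar>g x\<bar>" for x
    by (metis abs_mult abs_triangle_ineq)
qed

lemma L2_scale: "L2 M f \<Longrightarrow> L2 M (\<lambda>x. c * f x)"
  using L2_add[of M f f c 0] by simp

lemma L2_uminus_iff [simp]: "L2 M (\<lambda>x. - f x) \<longleftrightarrow> L2 M f"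
  unfolding L2_def by simp

definition clip :: "real \<Rightarrow> real \<Rightarrow> real" where
  "clip u a = max (- u) (min a u)"

lemma borel_measurable_clip [measurable]:
  "u \<in> borel_measurable M \<Longrightarrow> f \<in> borel_measurable M \<Longrightarrow> (\<lambda>x. clip (u x) (f x)) \<in> borel_measurable M"
  unfolding clip_def by (intro borel_measurable_max borel_measurable_min borel_measurable_uminus)

lemma clip_abs_le: "0 \<le> u \<Longrightarrow> \<bar>clip u a\<bar> \<le> \<bar>a\<bar>"
  unfolding clip_def by auto

lemma clip_lipschitz: "0 \<le> u \<Longrightarrow> 0 \<le> v \<Longrightarrow> \<bar>clip u a - clip v a\<bar> \<le> \<bar>u - v\<bar>"
  unfolding clip_def by auto

lemma clip_eq_self: "\<bar>a\<bar> \<le> u \<Longrightarrow> clip u a = a"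
  unfolding clip_def by auto

lemma clip_zero [simp]: "clip 0 a = 0"
  unfolding clip_def by auto

lemma max0_lipschitz: "\<bar>max 0 s - max 0 t\<bar> \<le> \<bar>s - t :: real\<bar>"
  by auto

lemma L2_clip_cutoff:
  assumes "L2 M f" "g \<in> borel_measurable M"
  shows "L2 M (\<lambda>x. clip (max 0 (l * g x - b)) (f x))"
proof (rule L2_dominated[OF assms(1), of _ 1])
  show "(\<lambda>x. clip (max 0 (l * g x - b)) (f x)) \<in> borel_measurable M"
    using L2_measurable[OF assms(1)] assms(2) by measurable
qed (simp add: clip_abs_le)

locale dirichlet_form =
  fixes M :: "'a measure" and E :: "('a \<Rightarrow> real) \<Rightarrow> ennreal"
  assumes nonlinear_dirichlet_form: "nonlinear_dirichlet_form M E"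
begin

lemma E_convex:
  "L2 M f \<Longrightarrow> L2 M g \<Longrightarrow> 0 \<le> t \<Longrightarrow> t \<le> 1 \<Longrightarrow>
    E (\<lambda>x. t * f x + (1 - t) * g x) \<le> ennreal t * E f + ennreal (1 - t) * E g"
  using nonlinear_dirichlet_form unfolding nonlinear_dirichlet_form_def by blast

lemma E_lsc:
  "(\<And>n. L2 M (fs n)) \<Longrightarrow> L2 M f \<Longrightarrow> ((\<lambda>n. \<integral>x. (fs n x - f x)\<^sup>2 \<partial>M) \<longlonglongrightarrow> 0) \<Longrightarrow>
    E f \<le> liminf (\<lambda>n. E (fs n))"
  using nonlinear_dirichlet_form unfolding nonlinear_dirichlet_form_def by blast

lemma E_uminus: "L2 M f \<Longrightarrow> E (\<lambda>x. - f x) = E f"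
  using nonlinear_dirichlet_form unfolding nonlinear_dirichlet_form_def by blast

lemma E_zero [simp]: "E (\<lambda>x. 0) = 0"
  using nonlinear_dirichlet_form unfolding nonlinear_dirichlet_form_def by blast

lemma E_contraction:
  "L2 M f \<Longrightarrow> L2 M g \<Longrightarrow> (\<forall>s t. \<bar>C s - C t\<bar> \<le> \<bar>s - t\<bar>) \<Longrightarrow> C 0 = 0 \<Longrightarrow>
    E (\<lambda>x. f x + C (g x)) + E (\<lambda>x. f x - C (g x)) \<le> E (\<lambda>x. f x + g x) + E (\<lambda>x. f x - g x)"
  using nonlinear_dirichlet_form unfolding nonlinear_dirichlet_form_def by blast

lemma E_scale: "L2 M g \<Longrightarrow> 0 \<le> t \<Longrightarrow> t \<le> 1 \<Longrightarrow> E (\<lambda>x. t * g x) \<le> ennreal t * E g"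
  using E_convex[OF _ L2_zero] by simp

lemma E_normal_contraction:
  assumes g: "L2 M g" and C: "\<forall>s t. \<bar>C s - C t\<bar> \<le> \<bar>s - t\<bar>" "C 0 = 0"
  shows "E (\<lambda>x. C (g x)) \<le> E g"
proof -
  have "continuous_on UNIV C"
    by (rule lipschitz_on_continuous_on[of 1], rule lipschitz_onI) (use C in \<open>auto simp: dist_real_def\<close>)
  then have "(\<lambda>x. C (g x)) \<in> borel_measurable M"
    by (rule measurable_compose[OF L2_measurable[OF g] borel_measurable_continuous_onI])
  then have Cg: "L2 M (\<lambda>x. C (g x))"
    by (rule L2_dominated[OF g, of _ 1]) (use C in \<open>metis diff_zero mult_1\<close>)
  have "E (\<lambda>x. 0 + C (g x)) + E (\<lambda>x. 0 - C (g x)) \<le> E (\<lambda>x. 0 + g x) + E (\<lambda>x. 0 - g x)"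
    by (rule E_contraction[OF L2_zero g C])
  then have "E (\<lambda>x. C (g x)) + E (\<lambda>x. C (g x)) \<le> E g + E g"
    using E_uminus[OF Cg] E_uminus[OF g] by simp
  then show ?thesis
    by (meson add_strict_mono not_le)
qed

lemma E_max_min:
  assumes a: "L2 M a" and b: "L2 M b"
  shows "E (\<lambda>x. max (a x) (b x)) + E (\<lambda>x. min (a x) (b x)) \<le> E a + E b"
proof -
  define p where "p x = (1/2) * a x + (1/2) * b x" for x
  define q where "q x = (1/2) * a x + (-1/2) * b x" for x
  have "E (\<lambda>x. p x + \<bar>q x\<bar>) + E (\<lambda>x. p x - \<bar>q x\<bar>) \<le> E (\<lambda>x. p x + q x) + E (\<lambda>x. p x - q x)"
    unfolding p_def q_def by (rule E_contraction[OF L2_add[OF a b] L2_add[OF a b]]) auto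
  moreover have "(\<lambda>x. p x + \<bar>q x\<bar>) = (\<lambda>x. max (a x) (b x))" "(\<lambda>x. p x - \<bar>q x\<bar>) = (\<lambda>x. min (a x) (b x))"
    "(\<lambda>x. p x + q x) = a" "(\<lambda>x. p x - q x) = b"
    unfolding p_def q_def by (auto simp: max_def min_def abs_if field_simps)
  ultimately show ?thesis by simp
qed

lemma E_max: "L2 M a \<Longrightarrow> L2 M b \<Longrightarrow> E (\<lambda>x. max (a x) (b x)) \<le> E a + E b"
  using order_trans[OF add_increasing2[OF zero_le order_refl] E_max_min] .

lemma E_min: "L2 M a \<Longrightarrow> L2 M b \<Longrightarrow> E (\<lambda>x. min (a x) (b x)) \<le> E a + E b"
  using order_trans[OF add_increasing[OF zero_le order_refl] E_max_min] .

lemma E_clip: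
  assumes f: "L2 M f" and u: "L2 M u"
  shows "E (\<lambda>x. clip (u x) (f x)) \<le> E f + E u + E u"
proof -
  have [measurable]: "f \<in> borel_measurable M" "u \<in> borel_measurable M"
    using f u by (auto dest: L2_measurable)
  have "L2 M (\<lambda>x. min (f x) (u x))"
    by (rule L2_bound[OF f u, of _ 1 1]) auto
  then have "E (\<lambda>x. clip (u x) (f x)) \<le> E (\<lambda>x. - u x) + E (\<lambda>x. min (f x) (u x))"
    unfolding clip_def using u by (intro E_max) auto
  also have "\<dots> \<le> E u + (E f + E u)"
    using E_uminus[OF u] E_min[OF f u] by (simp add: add_mono)
  finally show ?thesis by (simp add: ac_simps)
qed

lemma E_cutoff:
  assumes g: "L2 M g" and l: "0 \<le> l" "l \<le> 1" and b: "0 \<le> b"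
  shows "E (\<lambda>x. max 0 (l * g x - b)) \<le> ennreal l * E g"
proof -
  have "\<forall>s t. \<bar>max 0 (s - b) - max 0 (t - b)\<bar> \<le> \<bar>s - t\<bar>"
    by auto
  then have "E (\<lambda>x. max 0 (l * g x - b)) \<le> E (\<lambda>x. l * g x)"
    using E_normal_contraction[OF L2_scale[OF g], of "\<lambda>s. max 0 (s - b)"] b by simp
  also have "\<dots> \<le> ennreal l * E g"
    by (rule E_scale[OF g l])
  finally show ?thesis .
qed

lemma E_clip_cutoff:
  assumes f: "L2 M f" and g: "L2 M g" and l: "0 \<le> l" "l \<le> 1" and b: "0 \<le> b"
  shows "E (\<lambda>x. clip (max 0 (l * g x - b)) (f x)) \<le> E f + ennreal l * E g + ennreal l * E g"
proof -
  have "L2 M (\<lambda>x. max 0 (l * g x - b))"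
  proof (rule L2_dominated[OF g, of _ l])
    show "(\<lambda>x. max 0 (l * g x - b)) \<in> borel_measurable M"
      using L2_measurable[OF g] by measurable
    show "\<bar>max 0 (l * g x - b)\<bar> \<le> l * \<bar>g x\<bar>" for x
      using mult_left_mono[OF abs_ge_self[of "g x"] l(1)] l(1) b by (simp add: abs_mult)
  qed
  then have "E (\<lambda>x. clip (max 0 (l * g x - b)) (f x)) \<le> E f + E (\<lambda>x. max 0 (l * g x - b)) + E (\<lambda>x. max 0 (l * g x - b))"
    by (rule E_clip[OF f])
  also have "\<dots> \<le> E f + ennreal l * E g + ennreal l * E g"
    using E_cutoff[OF g l b] by (intro add_mono) auto
  finally show ?thesis .
qed

end

lemma integral_truncation_tendsto_zero:
  assumes F: "integrable M F" "\<And>x. x \<in> space M \<Longrightarrow> 0 \<le> F x"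
    and A: "\<And>k. A k \<in> sets M" "incseq A" "(\<Union>k. A k) = space M"
  shows "(\<lambda>k. \<integral>x. F x - min (F x) (real k * indicator (A k) x) \<partial>M) \<longlonglongrightarrow> 0"
proof -
  have [measurable]: "F \<in> borel_measurable M" "\<And>k. A k \<in> sets M"
    using F A by auto
  have "(\<lambda>k. \<integral>x. F x - min (F x) (real k * indicator (A k) x) \<partial>M) \<longlonglongrightarrow> integral\<^sup>L M (\<lambda>x. 0)"
  proof (rule integral_dominated_convergence[where w=F])
    show "AE x in M. (\<lambda>k. F x - min (F x) (real k * indicator (A k) x)) \<longlonglongrightarrow> 0"
    proof (rule AE_I2)
      fix x assume "x \<in> space M"
      then obtain i where "x \<in> A i"
        using A(3) by auto
      moreover obtain j where "F x \<le> real j"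
        using real_arch_simple by blast
      ultimately have "F x - min (F x) (real k * indicator (A k) x) = 0" if "max i j \<le> k" for k
        using that monoD[OF A(2), of i k] by (auto simp: indicator_def)
      then show "(\<lambda>k. F x - min (F x) (real k * indicator (A k) x)) \<longlonglongrightarrow> 0"
        by (intro tendsto_eventually eventually_sequentiallyI)
    qed
  qed (use F in \<open>auto intro!: AE_I2\<close>)
  then show ?thesis
    by simp
qed

lemma integral_le_truncation_level_split:
  assumes F: "integrable M F" and [measurable]: "D \<in> borel_measurable M"
    and D: "\<And>x. x \<in> space M \<Longrightarrow> 0 \<le> D x" "\<And>x. x \<in> space M \<Longrightarrow> D x \<le> F x"
    and [measurable]: "A \<in> sets M" and A: "emeasure M A < \<infinity>" and "0 \<le> K" "0 \<le> \<eta>"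
  shows "integral\<^sup>L M D \<le> (\<integral>x. F x - min (F x) (K * indicator A x) \<partial>M)
    + \<eta> * measure M A + K * measure M (A \<inter> {x \<in> space M. \<eta> < D x})"
proof -
  have [measurable]: "F \<in> borel_measurable M"
    using F by simp
  have F_nonneg: "\<And>x. x \<in> space M \<Longrightarrow> 0 \<le> F x"
    using D by (meson order_trans)
  have "emeasure M (A \<inter> {x \<in> space M. \<eta> < D x}) < \<infinity>"
    using A emeasure_mono[of "A \<inter> {x \<in> space M. \<eta> < D x}" A M] by auto
  moreover have "integrable M (\<lambda>x. F x - min (F x) (K * indicator A x))"
    by (rule Bochner_Integration.integrable_bound[OF F])
      (use F_nonneg \<open>0 \<le> K\<close> in \<open>auto intro!: AE_I2 simp: indicator_def\<close>)
  moreover have "integrable M D"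
    by (rule Bochner_Integration.integrable_bound[OF F]) (auto intro!: AE_I2 simp: D F_nonneg abs_of_nonneg)
  ultimately have "integral\<^sup>L M D \<le> \<integral>x. F x - min (F x) (K * indicator A x) + \<eta> * indicator A x
      + K * indicator (A \<inter> {x \<in> space M. \<eta> < D x}) x \<partial>M"
    using A D F_nonneg \<open>0 \<le> K\<close> \<open>0 \<le> \<eta>\<close>
    by (intro integral_mono) (auto simp: less_top, auto simp: indicator_def min_def dest: D(2))
  also have "\<dots> = (\<integral>x. F x - min (F x) (K * indicator A x) \<partial>M)
      + \<eta> * measure M A + K * measure M (A \<inter> {x \<in> space M. \<eta> < D x})"
    using \<open>integrable M (\<lambda>x. F x - min (F x) (K * indicator A x))\<close> A
      \<open>emeasure M (A \<inter> {x \<in> space M. \<eta> < D x}) < \<infinity>\<close> by (simp add: less_top)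
  finally show ?thesis .
qed

lemma integral_tendsto_zero_if_conv_loc_measure:
  assumes "sigma_finite_measure M" and F: "integrable M F"
    and D: "conv_loc_measure M D (\<lambda>x. 0)"
    and D_nonneg: "\<And>n x. x \<in> space M \<Longrightarrow> 0 \<le> D n x"
    and D_le: "\<And>n x. x \<in> space M \<Longrightarrow> D n x \<le> F x"
  shows "(\<lambda>n. integral\<^sup>L M (D n)) \<longlonglongrightarrow> 0"
proof -
  interpret sigma_finite_measure M by fact
  obtain A where A: "range A \<subseteq> sets M" "(\<Union>i. A i) = space M" "\<And>i. emeasure M (A i) \<noteq> \<infinity>"
    "incseq A"
    using sigma_finite_incseq by blast
  have [measurable]: "\<And>k. A k \<in> sets M" "\<And>n. D n \<in> borel_measurable M"
    using A(1) D by (auto simp: conv_loc_measure_def)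
  have "(\<lambda>k. \<integral>x. F x - min (F x) (real k * indicator (A k) x) \<partial>M) \<longlonglongrightarrow> 0"
    using F A D_nonneg D_le by (intro integral_truncation_tendsto_zero) (auto, meson order_trans)
  then have small_tail: "eventually (\<lambda>k. (\<integral>x. F x - min (F x) (real k * indicator (A k) x) \<partial>M) < r / 3)
      sequentially" if "0 < r" for r
    using that by (intro order_tendstoD(2)) auto
  from D have "\<forall>B\<in>sets M. emeasure M B < \<infinity> \<longrightarrow>
      (\<forall>\<eta>>0. (\<lambda>n. emeasure M (B \<inter> {x\<in>space M. \<bar>D n x - 0\<bar> > \<eta>})) \<longlonglongrightarrow> 0)"
    unfolding conv_loc_measure_def by blast
  moreover have "{x\<in>space M. \<bar>D n x - 0\<bar> > \<eta>} = {x\<in>space M. \<eta> < D n x}" for n \<eta>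
    using D_nonneg by auto
  ultimately have level: "(\<lambda>n. emeasure M (A k \<inter> {x\<in>space M. \<eta> < D n x})) \<longlonglongrightarrow> 0" if "0 < \<eta>" for k \<eta>
    using A(3)[of k] that by (simp add: less_top)
  show ?thesis
    unfolding tendsto_iff
  proof (intro allI impI)
    fix r :: real assume "0 < r"
    then obtain k where k: "(\<integral>x. F x - min (F x) (real k * indicator (A k) x) \<partial>M) < r / 3"
      using eventually_happens'[OF sequentially_bot small_tail] by blast
    define m where "m = measure M (A k)"
    define \<eta> where "\<eta> = r / (3 * (m + 1))"
    define \<delta> where "\<delta> = r / (3 * (real k + 1))"
    have "0 \<le> m"
      unfolding m_def by simp
    then have \<eta>: "0 < \<eta>" "\<eta> * m < r / 3"
      using \<open>0 < r\<close> by (auto simp: \<eta>_def field_simps)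
    have \<delta>: "0 < \<delta>" "real k * \<delta> < r / 3"
      using \<open>0 < r\<close> by (auto simp: \<delta>_def field_simps)
    have "eventually (\<lambda>n. emeasure M (A k \<inter> {x\<in>space M. \<eta> < D n x}) < ennreal \<delta>) sequentially"
      using level[OF \<eta>(1)] \<delta>(1) by (intro order_tendstoD(2)) auto
    then show "eventually (\<lambda>n. dist (integral\<^sup>L M (D n)) 0 < r) sequentially"
    proof eventually_elim
      case (elim n)
      then have "measure M (A k \<inter> {x\<in>space M. \<eta> < D n x}) \<le> \<delta>"
        using \<delta>(1) by (auto simp: measure_def intro: enn2real_leI)
      have "integral\<^sup>L M (D n) \<le> (\<integral>x. F x - min (F x) (real k * indicator (A k) x) \<partial>M)
          + \<eta> * m + real k * measure M (A k \<inter> {x\<in>space M. \<eta> < D n x})"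
        unfolding m_def using A(3)[of k] D_nonneg D_le \<eta>(1)
        by (intro integral_le_truncation_level_split[OF F]) (auto simp: less_top)
      also have "\<dots> < r"
        using k \<eta> \<delta> mult_left_mono[OF \<open>measure M _ \<le> \<delta>\<close>, of "real k"] by linarith
      finally show ?case
        using integral_nonneg_AE[of "D n" M] D_nonneg by (auto intro!: AE_I2)
    qed
  qed
qed

lemma conv_loc_measure_uminus:
  "conv_loc_measure M fs f \<Longrightarrow> conv_loc_measure M (\<lambda>n x. - fs n x) (\<lambda>x. - f x)"
  unfolding conv_loc_measure_def by (simp add: abs_minus_commute)

lemma lsc_L0_uminus: "lsc_L0 M G \<Longrightarrow> lsc_L0 M (\<lambda>g. G (\<lambda>x. - g x))"
  unfolding lsc_L0_def by (auto dest: conv_loc_measure_uminus)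

lemma conv_loc_measure_sq_diff:
  assumes conv: "conv_loc_measure M gs g" and L: "0 < L"
    and [measurable]: "\<And>n. u n \<in> borel_measurable M" "v \<in> borel_measurable M"
    and lipschitz: "\<And>n x. x \<in> space M \<Longrightarrow> \<bar>u n x - v x\<bar> \<le> L * \<bar>gs n x - g x\<bar>"
  shows "conv_loc_measure M (\<lambda>n x. (u n x - v x)\<^sup>2) (\<lambda>x. 0)"
  unfolding conv_loc_measure_def
proof (intro conjI ballI allI impI)
  have [measurable]: "g \<in> borel_measurable M" "\<And>n. gs n \<in> borel_measurable M"
    using conv unfolding conv_loc_measure_def by auto
  fix A \<eta> assume A: "A \<in> sets M" "emeasure M A < \<infinity>" and "(0::real) < \<eta>"
  have "A \<inter> {x\<in>space M. \<bar>(u n x - v x)\<^sup>2 - 0\<bar> > \<eta>} \<subseteq> A \<inter> {x\<in>space M. \<bar>gs n x - g x\<bar> > sqrt \<eta> / L}"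
    for n
  proof safe
    fix x assume "x \<in> space M" "\<bar>(u n x - v x)\<^sup>2 - 0\<bar> > \<eta>"
    then have "sqrt \<eta> < sqrt ((u n x - v x)\<^sup>2)"
      by (intro real_sqrt_less_mono) simp
    then have "sqrt \<eta> < \<bar>u n x - v x\<bar>"
      by (simp only: real_sqrt_abs)
    also have "\<dots> \<le> L * \<bar>gs n x - g x\<bar>"
      using lipschitz \<open>x \<in> space M\<close> .
    finally show "\<bar>gs n x - g x\<bar> > sqrt \<eta> / L"
      using L by (simp add: divide_less_eq mult.commute)
  qed
  moreover have "A \<inter> {x\<in>space M. \<bar>gs n x - g x\<bar> > sqrt \<eta> / L} \<in> sets M" for n
    using A(1) by measurable
  ultimately have le: "eventually (\<lambda>n. emeasure M (A \<inter> {x\<in>space M. \<bar>(u n x - v x)\<^sup>2 - 0\<bar> > \<eta>})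
      \<le> emeasure M (A \<inter> {x\<in>space M. \<bar>gs n x - g x\<bar> > sqrt \<eta> / L})) sequentially"
    by (intro always_eventually allI emeasure_mono)
  from conv have "\<forall>B\<in>sets M. emeasure M B < \<infinity> \<longrightarrow>
      (\<forall>\<epsilon>>0. (\<lambda>n. emeasure M (B \<inter> {x\<in>space M. \<bar>gs n x - g x\<bar> > \<epsilon>})) \<longlonglongrightarrow> 0)"
    unfolding conv_loc_measure_def by blast
  then have lim: "(\<lambda>n. emeasure M (A \<inter> {x\<in>space M. \<bar>gs n x - g x\<bar> > sqrt \<eta> / L})) \<longlonglongrightarrow> 0"
    using A \<open>0 < \<eta>\<close> L by simp
  show "(\<lambda>n. emeasure M (A \<inter> {x\<in>space M. \<bar>(u n x - v x)\<^sup>2 - 0\<bar> > \<eta>})) \<longlonglongrightarrow> 0"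
    by (rule tendsto_sandwich[OF _ le tendsto_const lim]) simp
qed measurable

lemma lsc_L0_superlevel_indicator:
  assumes "lsc_L0 M \<Phi>"
  shows "lsc_L0 M (\<lambda>g. if c < \<Phi> g then a else 0)"
  unfolding lsc_L0_def
proof (intro allI impI)
  fix gs g assume "conv_loc_measure M gs g"
  then have "\<Phi> g \<le> liminf (\<lambda>n. \<Phi> (gs n))"
    using assms unfolding lsc_L0_def by blast
  then have "c < \<Phi> g \<Longrightarrow> eventually (\<lambda>n. c < \<Phi> (gs n)) sequentially"
    unfolding le_Liminf_iff by blast
  then show "(if c < \<Phi> g then a else 0) \<le> liminf (\<lambda>n. if c < \<Phi> (gs n) then a else 0)"
  proof (cases "c < \<Phi> g")
    case True
    have "eventually (\<lambda>n. a \<le> (if c < \<Phi> (gs n) then a else 0)) sequentially"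
      using \<open>c < \<Phi> g \<Longrightarrow> _\<close>[OF True] by (rule eventually_mono) simp
    then show ?thesis
      unfolding if_P[OF True] by (rule Liminf_bounded)
  qed simp
qed

lemma lsc_minorant_le_E_e: "lsc_L0 M G \<Longrightarrow> (\<And>g. G g \<le> E_ext M E g) \<Longrightarrow> G f \<le> E_e M E f"
  unfolding E_e_def by (rule SUP_upper2[where i=G]) auto

context dirichlet_form
begin

lemma E_ext_uminus [simp]: "E_ext M E (\<lambda>x. - g x) = E_ext M E g"
  by (simp add: E_ext_def E_uminus)

lemma E_e_uminus [simp]: "E_e M E (\<lambda>x. - f x) = E_e M E f"
proof -
  have le: "E_e M E (\<lambda>x. - g x) \<le> E_e M E g" for g
    unfolding E_e_def[of M E "\<lambda>x. - g x"]
  proof (rule SUP_least)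
    fix G assume "G \<in> {G. lsc_L0 M G \<and> (\<forall>g. G g \<le> E_ext M E g)}"
    then have G: "lsc_L0 M G" "\<And>g. G g \<le> E_ext M E g"
      by auto
    show "G (\<lambda>x. - g x) \<le> E_e M E g"
    proof (intro lsc_minorant_le_E_e[where G="\<lambda>g. G (\<lambda>x. - g x)"] lsc_L0_uminus)
      show "G (\<lambda>x. - g' x) \<le> E_ext M E g'" for g'
        using G(2)[of "\<lambda>x. - g' x"] by simp
    qed (rule G(1))
  qed
  show ?thesis
    using le[of f] le[of "\<lambda>x. - f x"] by simp
qed

lemma ker_Le_uminus: "h \<in> ker_Le M E \<Longrightarrow> (\<lambda>x. - h x) \<in> ker_Le M E"
  unfolding ker_Le_def M_Ee_def norm_Le_def by simp

lemma lsc_L0_E_comp: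
  assumes "sigma_finite_measure M" and f: "L2 M f" and L: "0 < L"
    and \<Phi>_measurable: "\<And>g. g \<in> borel_measurable M \<Longrightarrow> \<Phi> g \<in> borel_measurable M"
    and \<Phi>_bound: "\<And>g x. x \<in> space M \<Longrightarrow> \<bar>\<Phi> g x\<bar> \<le> \<bar>f x\<bar>"
    and \<Phi>_lipschitz: "\<And>g g' x. x \<in> space M \<Longrightarrow> \<bar>\<Phi> g x - \<Phi> g' x\<bar> \<le> L * \<bar>g x - g' x\<bar>"
  shows "lsc_L0 M (\<lambda>g. E (\<Phi> g))"
  unfolding lsc_L0_def
proof (intro allI impI)
  fix gs g assume conv: "conv_loc_measure M gs g"
  then have [measurable]: "g \<in> borel_measurable M" "\<And>n. gs n \<in> borel_measurable M"
    "\<Phi> g \<in> borel_measurable M" "\<And>n. \<Phi> (gs n) \<in> borel_measurable M"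
    unfolding conv_loc_measure_def by (auto intro: \<Phi>_measurable)
  have \<Phi>_L2: "L2 M (\<Phi> g')" if "g' \<in> borel_measurable M" for g'
    using L2_dominated[OF f \<Phi>_measurable[OF that], of 1] \<Phi>_bound by simp
  define D where "D n x = (\<Phi> (gs n) x - \<Phi> g x)\<^sup>2" for n x
  have [measurable]: "D n \<in> borel_measurable M" for n
    unfolding D_def by measurable
  have D_nonneg: "0 \<le> D n x" for n x
    unfolding D_def by simp
  have "conv_loc_measure M D (\<lambda>x. 0)"
    unfolding D_def
    by (rule conv_loc_measure_sq_diff[OF conv L, where u="\<lambda>n. \<Phi> (gs n)" and v="\<Phi> g"])
      (simp_all add: \<Phi>_lipschitz)
  moreover have "D n x \<le> 4 * (f x)\<^sup>2" if "x \<in> space M" for n x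
  proof -
    have "\<bar>\<Phi> (gs n) x - \<Phi> g x\<bar> \<le> 2 * \<bar>f x\<bar>"
      using \<Phi>_bound[OF that, of "gs n"] \<Phi>_bound[OF that, of g] by linarith
    then have "\<bar>\<Phi> (gs n) x - \<Phi> g x\<bar>\<^sup>2 \<le> (2 * \<bar>f x\<bar>)\<^sup>2"
      by (rule power_mono) simp
    then show ?thesis
      unfolding D_def by (simp add: power_mult_distrib)
  qed
  ultimately have "(\<lambda>n. \<integral>x. D n x \<partial>M) \<longlonglongrightarrow> 0"
    using f by (intro integral_tendsto_zero_if_conv_loc_measure[OF assms(1), where F="\<lambda>x. 4 * (f x)\<^sup>2"])
      (auto simp: L2_def D_nonneg)
  then show "E (\<Phi> g) \<le> liminf (\<lambda>n. E (\<Phi> (gs n)))"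
    unfolding D_def by (intro E_lsc \<Phi>_L2) auto
qed

lemma lsc_L0_E_clip_cutoff:
  assumes "sigma_finite_measure M" and f: "L2 M f" and l: "0 < l"
  shows "lsc_L0 M (\<lambda>g. E (\<lambda>x. clip (max 0 (l * g x - b)) (f x)))"
proof (rule lsc_L0_E_comp[OF assms])
  show "\<bar>clip (max 0 (l * g x - b)) (f x)\<bar> \<le> \<bar>f x\<bar>" for g x
    by (simp add: clip_abs_le)
  show "\<bar>clip (max 0 (l * g x - b)) (f x) - clip (max 0 (l * g' x - b)) (f x)\<bar> \<le> l * \<bar>g x - g' x\<bar>"
    for g g' x
  proof -
    have "\<bar>clip (max 0 (l * g x - b)) (f x) - clip (max 0 (l * g' x - b)) (f x)\<bar>
        \<le> \<bar>(l * g x - b) - (l * g' x - b)\<bar>"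
      by (rule order_trans[OF clip_lipschitz max0_lipschitz]) auto
    also have "\<dots> = l * \<bar>g x - g' x\<bar>"
      using l by (simp add: abs_mult flip: right_diff_distrib)
    finally show ?thesis .
  qed
  show "(\<lambda>x. clip (max 0 (l * g x - b)) (f x)) \<in> borel_measurable M" if "g \<in> borel_measurable M" for g
    using L2_clip_cutoff[OF f that] by (rule L2_measurable)
qed

lemma E_clip_cutoff_le_of_E_e:
  assumes "sigma_finite_measure M" and f: "L2 M f" and l: "0 < l" "l \<le> 1" and b: "0 \<le> b"
    and g: "E_e M E g < 2"
  shows "E (\<lambda>x. clip (max 0 (l * g x - b)) (f x)) \<le> E f + ennreal (4 * l)"
proof -
  define G where "G g' = (if E f + ennreal (4 * l) < E (\<lambda>x. clip (max 0 (l * g' x - b)) (f x))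
    then 2 else (0::ennreal))" for g'
  have "lsc_L0 M G"
    unfolding G_def using assms(1) f l(1) by (intro lsc_L0_superlevel_indicator lsc_L0_E_clip_cutoff)
  moreover have "G g' \<le> E_ext M E g'" for g'
  proof (cases "L2 M g' \<and> E g' \<le> 2")
    case True
    then have "ennreal l * E g' \<le> ennreal (2 * l)"
      using mult_left_mono[of "E g'" 2 "ennreal l"] l by (simp add: ennreal_mult mult.commute)
    have "E (\<lambda>x. clip (max 0 (l * g' x - b)) (f x)) \<le> E f + ennreal l * E g' + ennreal l * E g'"
      using True l by (intro E_clip_cutoff[OF f _ _ l(2) b]) auto
    also have "\<dots> \<le> E f + ennreal (2 * l) + ennreal (2 * l)"
      using \<open>ennreal l * E g' \<le> ennreal (2 * l)\<close> by (intro add_mono) auto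
    also have "\<dots> = E f + ennreal (4 * l)"
      using l by (simp add: add.assoc flip: ennreal_plus)
    finally have "\<not> E f + ennreal (4 * l) < E (\<lambda>x. clip (max 0 (l * g' x - b)) (f x))"
      by (rule leD)
    then show ?thesis
      unfolding G_def by simp
  next
    case False
    then show ?thesis
      by (auto simp: G_def E_ext_def not_le less_imp_le)
  qed
  ultimately have "G g \<le> E_e M E g"
    by (rule lsc_minorant_le_E_e)
  then show ?thesis
    using g by (auto simp: G_def not_less split: if_splits)
qed

lemma E_clip_cutoff_le:
  assumes "sigma_finite_measure M" and f: "L2 M f"
    and h_small: "\<And>\<epsilon>. 0 < \<epsilon> \<Longrightarrow> \<exists>l>0. l < \<epsilon> \<and> E_e M E (\<lambda>x. h x / l) \<le> 1"
    and S: "0 < S" and \<alpha>: "0 \<le> \<alpha>"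
  shows "E (\<lambda>x. clip (max 0 (S * h x - S * \<alpha>)) (f x)) \<le> E f"
proof (rule ennreal_le_epsilon)
  fix e :: real assume "0 < e"
  then obtain l where l: "0 < l" "l < min (1 / S) (e / (4 * S))" "E_e M E (\<lambda>x. h x / l) \<le> 1"
    using h_small[of "min (1 / S) (e / (4 * S))"] S by auto
  then have Sl: "0 < S * l" "S * l \<le> 1" "4 * (S * l) \<le> e"
    using S by (auto simp: field_simps)
  have "E_e M E (\<lambda>x. h x / l) < 2"
    using l(3) by (rule order.strict_trans1) simp
  then have "E (\<lambda>x. clip (max 0 (S * l * (h x / l) - S * \<alpha>)) (f x)) \<le> E f + ennreal (4 * (S * l))"
    using Sl S \<alpha> by (intro E_clip_cutoff_le_of_E_e[OF assms(1) f]) auto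
  also have "\<dots> \<le> E f + ennreal e"
    using Sl by (intro add_left_mono ennreal_leI)
  finally show "E (\<lambda>x. clip (max 0 (S * h x - S * \<alpha>)) (f x)) \<le> E f + ennreal e"
    using l(1) by simp
qed

end

lemma clip_cutoff_tendsto_indicator:
  assumes f: "L2 M f" and [measurable]: "h \<in> borel_measurable M"
  shows "(\<lambda>n. \<integral>x. (clip (max 0 (real n * h x - real n * \<alpha>)) (f x)
            - indicator {x \<in> space M. h x > \<alpha>} x * f x)\<^sup>2 \<partial>M) \<longlonglongrightarrow> 0"
proof -
  have [measurable]: "f \<in> borel_measurable M"
    using f by (rule L2_measurable)
  have "(\<lambda>n. \<integral>x. (clip (max 0 (real n * h x - real n * \<alpha>)) (f x)
            - indicator {x \<in> space M. h x > \<alpha>} x * f x)\<^sup>2 \<partial>M) \<longlonglongrightarrow> integral\<^sup>L M (\<lambda>x. 0)"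
  proof (rule integral_dominated_convergence[where w="\<lambda>x. 4 * (f x)\<^sup>2"])
    show "integrable M (\<lambda>x. 4 * (f x)\<^sup>2)"
      using f unfolding L2_def by simp
    show "AE x in M. norm ((clip (max 0 (real n * h x - real n * \<alpha>)) (f x)
            - indicator {x \<in> space M. h x > \<alpha>} x * f x)\<^sup>2) \<le> 4 * (f x)\<^sup>2" for n
    proof (rule AE_I2)
      fix x
      have "\<bar>clip (max 0 (real n * h x - real n * \<alpha>)) (f x) - indicator {x \<in> space M. h x > \<alpha>} x * f x\<bar>
          \<le> 2 * \<bar>f x\<bar>"
        using clip_abs_le[of "max 0 (real n * h x - real n * \<alpha>)" "f x"] by (auto simp: indicator_def)
      from power_mono[OF this abs_ge_zero, of 2] show "norm ((clip (max 0 (real n * h x - real n * \<alpha>)) (f x)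
            - indicator {x \<in> space M. h x > \<alpha>} x * f x)\<^sup>2) \<le> 4 * (f x)\<^sup>2"
        by (simp add: power_mult_distrib)
    qed
    show "AE x in M. (\<lambda>n. (clip (max 0 (real n * h x - real n * \<alpha>)) (f x)
            - indicator {x \<in> space M. h x > \<alpha>} x * f x)\<^sup>2) \<longlonglongrightarrow> 0"
    proof (rule AE_I2)
      fix x assume "x \<in> space M"
      have "eventually (\<lambda>n. clip (max 0 (real n * h x - real n * \<alpha>)) (f x)
          = indicator {x \<in> space M. h x > \<alpha>} x * f x) sequentially"
      proof (cases "h x > \<alpha>")
        case True
        then obtain N where N: "\<bar>f x\<bar> < real N * (h x - \<alpha>)"
          using reals_Archimedean3[of "h x - \<alpha>"] by auto
        have "clip (max 0 (real n * h x - real n * \<alpha>)) (f x) = f x" if "N \<le> n" for n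
        proof (rule clip_eq_self)
          have "real N * (h x - \<alpha>) \<le> real n * (h x - \<alpha>)"
            using that True by (intro mult_right_mono) auto
          then show "\<bar>f x\<bar> \<le> max 0 (real n * h x - real n * \<alpha>)"
            using N by (simp add: algebra_simps)
        qed
        then show ?thesis
          using True \<open>x \<in> space M\<close> by (auto intro: eventually_sequentiallyI)
      next
        case False
        then have "real n * h x - real n * \<alpha> \<le> 0" for n
          using mult_left_mono[of "h x" \<alpha> "real n"] by simp
        then show ?thesis
          using False by (simp add: max_absorb1)
      qed
      then show "(\<lambda>n. (clip (max 0 (real n * h x - real n * \<alpha>)) (f x)
            - indicator {x \<in> space M. h x > \<alpha>} x * f x)\<^sup>2) \<longlonglongrightarrow> 0"
        by (rule tendsto_eventually[OF eventually_mono]) simp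
    qed
  qed measurable
  then show ?thesis
    by simp
qed

context dirichlet_form
begin

lemma E_invariant_superlevel:
  assumes "sigma_finite_measure M" and [measurable]: "h \<in> borel_measurable M"
    and h_small: "\<And>\<epsilon>. 0 < \<epsilon> \<Longrightarrow> \<exists>l>0. l < \<epsilon> \<and> E_e M E (\<lambda>x. h x / l) \<le> 1"
    and \<alpha>: "0 \<le> \<alpha>"
  shows "E_invariant M E {x \<in> space M. h x > \<alpha>}"
  unfolding E_invariant_def
proof (intro conjI allI impI)
  show "{x \<in> space M. h x > \<alpha>} \<in> sets M"
    by measurable
  fix f assume f: "L2 M f"
  have [measurable]: "f \<in> borel_measurable M"
    using f by (rule L2_measurable)
  have "L2 M (\<lambda>x. indicator {x \<in> space M. h x > \<alpha>} x * f x)"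
    by (rule L2_dominated[OF f, of _ 1]) (measurable, simp add: indicator_def)
  then have "E (\<lambda>x. indicator {x \<in> space M. h x > \<alpha>} x * f x)
      \<le> liminf (\<lambda>n. E (\<lambda>x. clip (max 0 (real n * h x - real n * \<alpha>)) (f x)))"
    by (intro E_lsc L2_clip_cutoff[OF f] clip_cutoff_tendsto_indicator[OF f]) auto
  also have "\<dots> \<le> E f"
    using f h_small \<alpha> by (intro Liminf_le eventually_sequentiallyI[of 1] E_clip_cutoff_le[OF assms(1)]) auto
  finally show "E (\<lambda>x. indicator {x \<in> space M. h x > \<alpha>} x * f x) \<le> E f" .
qed

end

lemma ker_Le_E_e_divide_le_1:
  assumes h: "h \<in> ker_Le M E" and "0 < \<epsilon>"
  shows "\<exists>l>0. l < \<epsilon> \<and> E_e M E (\<lambda>x. h x / l) \<le> 1"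
proof -
  define Q where "Q = {l::real. l > 0 \<and> E_e M E (\<lambda>x. h x / l) \<le> 1}"
  have "((\<lambda>t. E_e M E (\<lambda>x. t * h x)) \<longlongrightarrow> 0) (at_right (0::real))"
    using h unfolding ker_Le_def M_Ee_def by auto
  then have "eventually (\<lambda>t. E_e M E (\<lambda>x. t * h x) < 1) (at_right (0::real))"
    by (rule order_tendstoD(2)) simp
  then obtain b where b: "0 < b" "\<And>t. 0 < t \<Longrightarrow> t < b \<Longrightarrow> E_e M E (\<lambda>x. t * h x) < 1"
    unfolding eventually_at_right_field by auto
  have "(\<lambda>x. h x / (2 / b)) = (\<lambda>x. b / 2 * h x)"
    by auto
  \<comment> \<open>\<open>norm_Le h = 0\<close> alone is useless if \<open>Q = {}\<close>, where \<open>Inf\<close> is unspecified\<close>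
  then have "2 / b \<in> Q"
    unfolding Q_def using b(1) b(2)[of "b / 2"] by simp
  moreover have "Inf Q < \<epsilon>"
    using h \<open>0 < \<epsilon>\<close> unfolding ker_Le_def norm_Le_def Q_def by simp
  ultimately obtain l where "l \<in> Q" "l < \<epsilon>"
    using cInf_lessD by blast
  then show ?thesis
    unfolding Q_def by auto
qed

lemma (in dirichlet_form) E_invariant_superlevel_ker_Le:
  "sigma_finite_measure M \<Longrightarrow> h \<in> ker_Le M E \<Longrightarrow> 0 \<le> \<alpha> \<Longrightarrow> E_invariant M E {x \<in> space M. h x > \<alpha>}"
  by (rule E_invariant_superlevel) (auto simp: ker_Le_def M_Ee_def intro: ker_Le_E_e_divide_le_1)

lemma E_irreducible_AE_dichotomy:
  assumes "E_irreducible M E" and "E_invariant M E {x \<in> space M. P x}"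
  shows "(AE x in M. P x) \<or> (AE x in M. \<not> P x)"
proof -
  have A: "{x \<in> space M. P x} \<in> sets M"
    using assms(2) unfolding E_invariant_def by blast
  have "(AE x in M. P x) \<longleftrightarrow> emeasure M (space M - {x \<in> space M. P x}) = 0"
    using A by (intro AE_iff_measurable) auto
  moreover have "(AE x in M. \<not> P x) \<longleftrightarrow> emeasure M {x \<in> space M. P x} = 0"
    using A by (intro AE_iff_measurable) auto
  ultimately show ?thesis
    using assms unfolding E_irreducible_def by blast
qed

lemma AE_eq_const_of_superlevel_dichotomy:
  fixes h :: "'a \<Rightarrow> real"
  assumes dichotomy: "\<And>\<alpha>. a \<le> \<alpha> \<Longrightarrow> (AE x in M. h x > \<alpha>) \<or> (AE x in M. h x \<le> \<alpha>)"
    and above: "AE x in M. h x > a"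
  shows "\<exists>c. AE x in M. h x = c"
proof -
  define S where "S = {\<alpha>. a \<le> \<alpha> \<and> (AE x in M. h x > \<alpha>)}"
  have "a \<in> S"
    unfolding S_def using above by simp
  show ?thesis
  proof (cases "bdd_above S")
    case False
    have "AE x in M. h x > real n" for n
    proof -
      obtain \<alpha> where "\<alpha> \<in> S" "real n < \<alpha>"
        using False unfolding bdd_above_def by (auto simp: not_le)
      then show ?thesis
        unfolding S_def by (auto elim: eventually_mono)
    qed
    then have "AE x in M. \<forall>n. h x > real n"
      by (simp add: AE_all_countable)
    then have "AE x in M. False"
      by (rule eventually_mono) (use reals_Archimedean2 less_asym in blast)
    then show ?thesis
      by (auto elim: eventually_mono)
  next
    case True
    define c where "c = Sup S"
    have "a \<le> c"
      unfolding c_def using \<open>a \<in> S\<close> True by (rule cSup_upper)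
    have below: "AE x in M. h x > c - inverse (real (Suc m))" for m
    proof -
      have "c - inverse (real (Suc m)) < Sup S"
        unfolding c_def by simp
      then obtain \<alpha> where "\<alpha> \<in> S" "c - inverse (real (Suc m)) < \<alpha>"
        using less_cSup_iff[OF _ True] \<open>a \<in> S\<close> by blast
      then show ?thesis
        unfolding S_def by (auto elim: eventually_mono)
    qed
    have not_above: "AE x in M. h x \<le> c + inverse (real (Suc m))" for m
    proof -
      have "c + inverse (real (Suc m)) \<notin> S"
        using cSup_upper[OF _ True, of "c + inverse (real (Suc m))"] unfolding c_def by auto
      moreover have "a \<le> c + inverse (real (Suc m))"
        using \<open>a \<le> c\<close> by (intro add_increasing2) simp_all
      ultimately show ?thesis
        using dichotomy[of "c + inverse (real (Suc m))"] unfolding S_def by blast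
    qed
    have "AE x in M. \<forall>m. c - inverse (real (Suc m)) < h x \<and> h x \<le> c + inverse (real (Suc m))"
      using below not_above by (simp add: AE_all_countable AE_conj_iff)
    then have "AE x in M. h x = c"
    proof (rule eventually_mono)
      fix x assume bounds: "\<forall>m. c - inverse (real (Suc m)) < h x \<and> h x \<le> c + inverse (real (Suc m))"
      show "h x = c"
      proof (rule ccontr)
        assume "h x \<noteq> c"
        then obtain m where "inverse (real (Suc m)) < \<bar>h x - c\<bar>"
          using reals_Archimedean[of "\<bar>h x - c\<bar>"] by auto
        then show False
          using bounds[rule_format, of m] by (auto simp: abs_if split: if_splits)
      qed
    qed
    then show ?thesis ..
  qed
qed

lemma AE_eq_const_of_two_sided_superlevel_dichotomy:
  fixes h :: "'a \<Rightarrow> real"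
  assumes upper: "\<And>\<alpha>. 0 \<le> \<alpha> \<Longrightarrow> (AE x in M. h x > \<alpha>) \<or> (AE x in M. h x \<le> \<alpha>)"
    and lower: "\<And>\<alpha>. 0 \<le> \<alpha> \<Longrightarrow> (AE x in M. - h x > \<alpha>) \<or> (AE x in M. - h x \<le> \<alpha>)"
  shows "\<exists>c. AE x in M. h x = c"
proof -
  consider "AE x in M. h x > 0" | "AE x in M. - h x > 0" | "AE x in M. h x \<le> 0" "AE x in M. - h x \<le> 0"
    using upper[of 0] lower[of 0] by auto
  then show ?thesis
  proof cases
    case 1
    with upper show ?thesis
      by (rule AE_eq_const_of_superlevel_dichotomy)
  next
    case 2
    have "\<exists>c. AE x in M. - h x = c"
      using lower 2 by (rule AE_eq_const_of_superlevel_dichotomy)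
    then obtain c where "AE x in M. - h x = c" ..
    then have "AE x in M. h x = - c"
      by (rule eventually_mono) auto
    then show ?thesis ..
  next
    case 3
    then have "AE x in M. h x = 0"
      by eventually_elim simp
    then show ?thesis ..
  qed
qed

theorem theorem3p16:
  fixes M :: "'a measure" and E :: "('a \<Rightarrow> real) \<Rightarrow> ennreal"
  assumes "sigma_finite_measure M"
    and "nonlinear_dirichlet_form M E"
  shows "(\<forall>h \<in> ker_Le M E. \<forall>\<alpha>::real. \<alpha> \<ge> 0 \<longrightarrow> E_invariant M E {x \<in> space M. h x > \<alpha>})
         \<and> (E_irreducible M E \<longrightarrow> (\<forall>h \<in> ker_Le M E. \<exists>c::real. AE x in M. h x = c))"
proof -
  interpret dirichlet_form M E
    by unfold_locales (rule assms(2))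
  have invariant: "E_invariant M E {x \<in> space M. h x > \<alpha>}" if "h \<in> ker_Le M E" "0 \<le> \<alpha>" for h \<alpha>
    using E_invariant_superlevel_ker_Le[OF assms(1)] that .
  have "\<exists>c. AE x in M. h x = c" if "E_irreducible M E" "h \<in> ker_Le M E" for h
  proof (rule AE_eq_const_of_two_sided_superlevel_dichotomy)
    show "(AE x in M. h x > \<alpha>) \<or> (AE x in M. h x \<le> \<alpha>)" if "0 \<le> \<alpha>" for \<alpha>
      using E_irreducible_AE_dichotomy[OF \<open>E_irreducible M E\<close> invariant[OF \<open>h \<in> ker_Le M E\<close> that]]
      by (simp add: not_less)
    show "(AE x in M. - h x > \<alpha>) \<or> (AE x in M. - h x \<le> \<alpha>)" if "0 \<le> \<alpha>" for \<alpha>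
      using E_irreducible_AE_dichotomy[OF \<open>E_irreducible M E\<close>
          invariant[OF ker_Le_uminus[OF \<open>h \<in> ker_Le M E\<close>] that]]
      by (simp add: not_less)
  qed
  with invariant show ?thesis
    by blast
qed

end
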